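(* For every $r\in\mathbb{N}$ and every integer $n\ge 2$, there is an entrywise nonnegative $3rn\times 3rn$ real matrix $M$ with $\mathrm{rank}^+(M)\ge 4r$ such that for every set of fewer than $n$ rows of $M$, the submatrix of $M$ consisting of those rows has nonnegative rank at most $3r$.
   Context: For an entrywise nonnegative matrix $N$ of dimension $a\times b$, its nonnegative rank $\mathrm{rank}^+(N)$ is the smallest $k$ such that $N=AW$ with $A$ an entrywise nonnegative $a\times k$ matrix and $W$ an entrywise nonnegative $k\times b$ matrix. *)

theory Defs
  imports Main "HOL-Analysis.Analysis"
begin

text \<open>Matrices of varying dimension are represented as functions nat => nat => real;
  the rows are indexed by a finite set I of naturals, columns by {..<b}.
  A submatrix consisting of a set I of rows of M is M restricted to I.\<close>

definition nonneg_fact :: "(nat \<Rightarrow> nat \<Rightarrow> real) \<Rightarrow> nat set \<Rightarrow> nat \<Rightarrow> nat \<Rightarrow> bool" where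
  "nonneg_fact M I b k \<longleftrightarrow>
     (\<exists>A W :: nat \<Rightarrow> nat \<Rightarrow> real.
        (\<forall>i\<in>I. \<forall>l<k. 0 \<le> A i l) \<and> (\<forall>l<k. \<forall>j<b. 0 \<le> W l j) \<and>
        (\<forall>i\<in>I. \<forall>j<b. M i j = (\<Sum>l<k. A i l * W l j)))"

definition nonneg_rank :: "(nat \<Rightarrow> nat \<Rightarrow> real) \<Rightarrow> nat set \<Rightarrow> nat \<Rightarrow> nat" where
  "nonneg_rank M I b = (LEAST k. nonneg_fact M I b k)"

end

theory Submission
  imports Defs
begin

text \<open>
  Let N = 3n and let S be the N \<times> N slack matrix of the regular N-gon with vertices
  u_j = (cos \<theta>_j, sin \<theta>_j), \<theta>_j = 2\<pi>j/N, in the concentric N-gon \<langle>u_k, x\<rangle> \<le> \<rho>,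
  \<rho> = 2 cos (2\<pi>/N); that is, S_kj = \<rho> - cos (\<theta>_k - \<theta>_j). The matrix M is block diagonal
  with r copies of S.

  S has rank 3 but nonnegative rank at least 4. A nonnegative factorization S = A W through
  \<real>^3 agrees with S = F V on an equilateral triangle of indices, whose minors are invertible;
  hence A = F X and W = Y V with Y X = 1. Summing over the triangle shows that the third row of X and the third
  column of Y are nonnegative, and since they pair to 1 some coordinate l contributes at
  most 1/3. Column l of X is then a point of the outer polygon and row l of Y a functional
  that is nonnegative on the inner polygon, and approximating both by polygon directions
  up to a factor cos (\<pi>/N) contradicts the gap between the two polygons.

  Conversely \<rho> - cos (a - b) is the average of (\<rho> - 2 cos (a - \<phi>)) (1 + cos (b - \<phi>)) over the
  three rotations \<phi> = \<theta>_c + 2\<pi>m/3, and the first factor is nonnegative on all rows k with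
  k \<noteq> c (mod n). Fewer than n rows miss some residue class c in every block, so they admit
  a nonnegative factorization of size 3 per block, whereas in the whole of M the supports of
  the factors used by different blocks are disjoint.
\<close>

section \<open>Nonnegative factorizations indexed by arbitrary sets\<close>

definition nonneg_fact_over :: "(nat \<Rightarrow> nat \<Rightarrow> real) \<Rightarrow> nat set \<Rightarrow> nat \<Rightarrow> 'l set \<Rightarrow> bool" where
  "nonneg_fact_over M I b L \<longleftrightarrow>
     (\<exists>A W. (\<forall>i\<in>I. \<forall>l\<in>L. 0 \<le> A i l) \<and> (\<forall>l\<in>L. \<forall>j<b. 0 \<le> W l j) \<and>
        (\<forall>i\<in>I. \<forall>j<b. M i j = (\<Sum>l\<in>L. A i l * W l j)))"

lemma nonneg_fact_iff_over: "nonneg_fact M I b k \<longleftrightarrow> nonneg_fact_over M I b {..<k}"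
  unfolding nonneg_fact_def nonneg_fact_over_def by (simp add: Ball_def)

lemma nonneg_fact_over_inj:
  assumes h: "inj_on h L" "h ` L \<subseteq> L'" and "finite L'"
    and fact: "nonneg_fact_over M I b L"
  shows "nonneg_fact_over M I b L'"
proof -
  obtain A W where A: "\<forall>i\<in>I. \<forall>l\<in>L. 0 \<le> A i l" and W: "\<forall>l\<in>L. \<forall>j<b. 0 \<le> W l j"
    and M: "\<forall>i\<in>I. \<forall>j<b. M i j = (\<Sum>l\<in>L. A i l * W l j)"
    using fact unfolding nonneg_fact_over_def by blast
  define g where "g = inv_into L h"
  have g: "g (h l) = l" if "l \<in> L" for l
    unfolding g_def using h(1) that by simp
  define A' where "A' i l' = (if l' \<in> h ` L then A i (g l') else 0)" for i l'
  define W' where "W' l' j = (if l' \<in> h ` L then W (g l') j else 0)" for l' j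
  have sums: "(\<Sum>l'\<in>L'. A' i l' * W' l' j) = (\<Sum>l\<in>L. A i l * W l j)" for i j
  proof -
    have "(\<Sum>l'\<in>L'. A' i l' * W' l' j) = (\<Sum>l'\<in>h ` L. A i (g l') * W (g l') j)"
      unfolding A'_def W'_def using h(2) \<open>finite L'\<close> by (intro sum.mono_neutral_cong_right) auto
    also have "\<dots> = (\<Sum>l\<in>L. A i l * W l j)"
      using h(1) g by (simp add: sum.reindex)
    finally show ?thesis .
  qed
  have "\<forall>i\<in>I. \<forall>l'\<in>L'. 0 \<le> A' i l'" "\<forall>l'\<in>L'. \<forall>j<b. 0 \<le> W' l' j"
    unfolding A'_def W'_def using A W g by auto
  then show ?thesis
    unfolding nonneg_fact_over_def using M sums by (intro exI[of _ A'] exI[of _ W']) simp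
qed

lemma nonneg_fact_card:
  assumes "finite L" and "nonneg_fact_over M I b L"
  shows "nonneg_fact M I b (card L)"
proof -
  obtain h where "bij_betw h L {0..<card L}"
    using ex_bij_betw_finite_nat[OF \<open>finite L\<close>] by blast
  then show ?thesis
    unfolding nonneg_fact_iff_over
    by (intro nonneg_fact_over_inj[OF _ _ _ assms(2)]) (auto simp: bij_betw_def atLeast0LessThan)
qed

lemma nonneg_fact_over_subset_rows:
  "I' \<subseteq> I \<Longrightarrow> nonneg_fact_over M I b L \<Longrightarrow> nonneg_fact_over M I' b L"
  unfolding nonneg_fact_over_def by blast

lemma nonneg_fact_self:
  assumes "\<forall>i\<in>I. \<forall>j<b. 0 \<le> M i j"
  shows "nonneg_fact M I b b"
  unfolding nonneg_fact_def
proof (intro exI conjI)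
  show "\<forall>l<b. \<forall>j<b. 0 \<le> (if l = j then 1 else 0 :: real)" by simp
  show "\<forall>i\<in>I. \<forall>j<b. M i j = (\<Sum>l<b. M i l * (if l = j then 1 else 0))"
    by (simp add: if_distrib cong: if_cong)
qed (use assms in simp)

lemma nonneg_rank_le: "nonneg_fact M I b k \<Longrightarrow> nonneg_rank M I b \<le> k"
  unfolding nonneg_rank_def by (rule Least_le)

lemma nonneg_rank_ge:
  assumes "\<forall>i\<in>I. \<forall>j<b. 0 \<le> M i j" and "\<And>k. nonneg_fact M I b k \<Longrightarrow> m \<le> k"
  shows "m \<le> nonneg_rank M I b"
  unfolding nonneg_rank_def
  using LeastI[of "nonneg_fact M I b", OF nonneg_fact_self[OF assms(1)]] assms(2) by blast

section \<open>Block diagonal matrices\<close>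

definition block_diag :: "nat \<Rightarrow> (nat \<Rightarrow> nat \<Rightarrow> real) \<Rightarrow> nat \<Rightarrow> nat \<Rightarrow> real" where
  "block_diag N B i j = (if i div N = j div N then B (i mod N) (j mod N) else 0)"

lemma card_block_rows_le:
  fixes I :: "nat set"
  assumes "finite I"
  shows "card {k. k < N \<and> b * N + k \<in> I} \<le> card I"
proof (rule card_inj_on_le)
  show "inj_on (\<lambda>k. b * N + k) {k. k < N \<and> b * N + k \<in> I}" by (simp add: inj_on_def)
qed (use assms in auto)

lemma nonneg_fact_over_block_diag:
  assumes I: "I \<subseteq> {..<r * N}"
    and blocks: "\<And>b. b < r \<Longrightarrow> nonneg_fact_over B {k. k < N \<and> b * N + k \<in> I} N L"
  shows "nonneg_fact_over (block_diag N B) I (r * N) ({..<r} \<times> L)"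
proof -
  define rows where "rows b = {k. k < N \<and> b * N + k \<in> I}" for b
  have "\<forall>b\<in>{..<r}. \<exists>AW. (\<forall>k\<in>rows b. \<forall>l\<in>L. 0 \<le> fst AW k l) \<and> (\<forall>l\<in>L. \<forall>j<N. 0 \<le> snd AW l j)
      \<and> (\<forall>k\<in>rows b. \<forall>j<N. B k j = (\<Sum>l\<in>L. fst AW k l * snd AW l j))"
    using blocks unfolding nonneg_fact_over_def rows_def split_paired_Ex by simp
  then obtain AW where AW: "\<forall>b\<in>{..<r}. (\<forall>k\<in>rows b. \<forall>l\<in>L. 0 \<le> fst (AW b) k l)
      \<and> (\<forall>l\<in>L. \<forall>j<N. 0 \<le> snd (AW b) l j)
      \<and> (\<forall>k\<in>rows b. \<forall>j<N. B k j = (\<Sum>l\<in>L. fst (AW b) k l * snd (AW b) l j))"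
    by (rule bchoice[THEN exE])
  define A where "A b = fst (AW b)" for b
  define W where "W b = snd (AW b)" for b
  have A: "\<And>b k l. b < r \<Longrightarrow> k \<in> rows b \<Longrightarrow> l \<in> L \<Longrightarrow> 0 \<le> A b k l"
    and W: "\<And>b l j. b < r \<Longrightarrow> l \<in> L \<Longrightarrow> j < N \<Longrightarrow> 0 \<le> W b l j"
    and eq: "\<And>b k j. b < r \<Longrightarrow> k \<in> rows b \<Longrightarrow> j < N \<Longrightarrow> B k j = (\<Sum>l\<in>L. A b k l * W b l j)"
    using AW unfolding A_def W_def by auto
  define A' where "A' i = (\<lambda>(b, l). if b = i div N then A b (i mod N) l else 0)" for i
  define W' where "W' = (\<lambda>(b, l) j. if b = j div N then W b l (j mod N) else 0)"
  have col: "j div N < r" "j mod N < N" if "j < r * N" for j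
  proof -
    have "0 < N" using that by (metis mult_0_right not_less_zero gr0I)
    then show "j div N < r" "j mod N < N" using that by (simp_all add: div_less_iff_less_mult)
  qed
  have row: "i div N < r" "i mod N \<in> rows (i div N)" if "i \<in> I" for i
    using that I col[of i] by (auto simp: rows_def mult.commute)
  have "block_diag N B i j = (\<Sum>p\<in>{..<r} \<times> L. A' i p * W' p j)" if "i \<in> I" "j < r * N" for i j
  proof -
    have inner: "(\<Sum>l\<in>L. A' i (b, l) * W' (b, l) j) = (if b = i div N \<and> i div N = j div N
        then (\<Sum>l\<in>L. A b (i mod N) l * W b l (j mod N)) else 0)" for b
      by (cases "b = i div N"; cases "b = j div N") (simp_all add: A'_def W'_def)
    have "(\<Sum>p\<in>{..<r} \<times> L. A' i p * W' p j) = (\<Sum>b<r. \<Sum>l\<in>L. A' i (b, l) * W' (b, l) j)"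
      by (rule sum.cartesian_product')
    also have "\<dots> = (if i div N = j div N then (\<Sum>l\<in>L. A (i div N) (i mod N) l * W (i div N) l (j mod N)) else 0)"
      unfolding inner using row[OF that(1)] by (cases "i div N = j div N") simp_all
    also have "\<dots> = block_diag N B i j"
      unfolding block_diag_def using row[OF that(1)] col[OF that(2)] eq[of "i div N" "i mod N" "j mod N"]
      by auto
    finally show ?thesis ..
  qed
  moreover have "\<forall>i\<in>I. \<forall>p\<in>{..<r} \<times> L. 0 \<le> A' i p"
    using A row by (auto simp: A'_def)
  moreover have "\<forall>p\<in>{..<r} \<times> L. \<forall>j<r * N. 0 \<le> W' p j"
    using W col by (auto simp: W'_def)
  ultimately show ?thesis
    unfolding nonneg_fact_over_def by (intro exI[of _ A'] exI[of _ W']) simp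
qed

lemma nonneg_fact_block_diag_ge:
  assumes block_bound: "\<And>S. finite S \<Longrightarrow> nonneg_fact_over B {..<N} N S \<Longrightarrow> m \<le> card (S :: nat set)"
    and fact: "nonneg_fact (block_diag N B) {..<r * N} (r * N) k"
  shows "r * m \<le> k"
proof -
  obtain A W where A: "\<forall>i\<in>{..<r * N}. \<forall>l<k. 0 \<le> A i l" and W: "\<forall>l<k. \<forall>j<r * N. 0 \<le> W l j"
    and eq: "\<forall>i\<in>{..<r * N}. \<forall>j<r * N. block_diag N B i j = (\<Sum>l<k. A i l * W l j)"
    using fact unfolding nonneg_fact_def by blast
  have idx: "b * N + i < r * N" if "b < r" "i < N" for b i
  proof -
    have "b * N + i < Suc b * N" using that by simp
    also have "\<dots> \<le> r * N" using that by (intro mult_right_mono) auto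
    finally show ?thesis .
  qed
  have block: "block_diag N B (b * N + i) (b' * N + j) = (if b = b' then B i j else 0)"
    if "i < N" "j < N" for b b' i j
    using that unfolding block_diag_def by simp
  have term_nonneg: "0 \<le> A i l * W l j" if "i < r * N" "l < k" "j < r * N" for i l j
    using A W that by simp
  define used where "used b = {l. l < k \<and> (\<exists>i<N. \<exists>j<N. 0 < A (b * N + i) l * W l (b * N + j))}" for b
  have card_used: "m \<le> card (used b)" if b: "b < r" for b
  proof (rule block_bound)
    show "finite (used b)" unfolding used_def by simp
    have "B i j = (\<Sum>l\<in>used b. A (b * N + i) l * W l (b * N + j))" if "i < N" "j < N" for i j
    proof -
      have "B i j = (\<Sum>l<k. A (b * N + i) l * W l (b * N + j))"
        using eq block[of i j b b] idx b that by simp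
      also have "\<dots> = (\<Sum>l\<in>used b. A (b * N + i) l * W l (b * N + j))"
        using term_nonneg[of "b * N + i" _ "b * N + j"] idx b that
        by (intro sum.mono_neutral_right) (auto simp: used_def order.order_iff_strict)
      finally show ?thesis .
    qed
    then show "nonneg_fact_over B {..<N} N (used b)"
      unfolding nonneg_fact_over_def using A W idx b
      by (intro exI[of _ "\<lambda>i l. A (b * N + i) l"] exI[of _ "\<lambda>l j. W l (b * N + j)"])
        (auto simp: used_def)
  qed
  have disjoint: "used b \<inter> used b' = {}" if "b < r" "b' < r" "b \<noteq> b'" for b b'
  proof (rule ccontr)
    assume "used b \<inter> used b' \<noteq> {}"
    then obtain l i j i' j' where l: "l < k" and ij: "i < N" "j < N" "i' < N" "j' < N"
      and pos: "0 < A (b * N + i) l * W l (b * N + j)" "0 < A (b' * N + i') l * W l (b' * N + j')"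
      unfolding used_def by blast
    have "0 \<le> A (b * N + i) l" "0 \<le> W l (b * N + j)" "0 \<le> A (b' * N + i') l" "0 \<le> W l (b' * N + j')"
      using A W idx that ij l by auto
    then have "0 < A (b * N + i) l" "0 < W l (b' * N + j')"
      using pos by (auto simp: zero_less_mult_iff)
    then have "0 < A (b * N + i) l * W l (b' * N + j')" by simp
    also have "\<dots> \<le> (\<Sum>l'<k. A (b * N + i) l' * W l' (b' * N + j'))"
      using term_nonneg idx that ij l by (intro member_le_sum) auto
    also have "\<dots> = 0" using eq block[of i j' b b'] idx that ij by simp
    finally show False by simp
  qed
  have "r * m = (\<Sum>b<r. m)" by simp
  also have "\<dots> \<le> (\<Sum>b<r. card (used b))" using card_used by (intro sum_mono) simp
  also have "\<dots> = card (\<Union>b<r. used b)"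
    using disjoint by (intro card_UN_disjoint[symmetric]) (auto simp: used_def)
  also have "\<dots> \<le> k" using card_mono[of "{..<k}" "\<Union>b<r. used b"] by (auto simp: used_def)
  finally show ?thesis .
qed

section \<open>The slack matrix of two nested regular polygons\<close>

lemma factorization_through_invertible_minor:
  fixes a f :: "'i \<Rightarrow> real^'n" and w v :: "'j \<Rightarrow> real^'n"
    and p :: "'n \<Rightarrow> 'i" and q :: "'n \<Rightarrow> 'j"
  assumes eq: "\<And>k j. k \<in> K \<Longrightarrow> j \<in> J \<Longrightarrow> a k \<bullet> w j = f k \<bullet> v j"
    and p: "\<And>i. p i \<in> K" and q: "\<And>m. q m \<in> J"
    and F: "invertible (\<chi> i. f (p i))" and V: "invertible (\<chi> i m. v (q m) $ i)"
  obtains X Y where "\<And>k. k \<in> K \<Longrightarrow> a k = f k v* X" "\<And>j. j \<in> J \<Longrightarrow> w j = Y *v v j"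
    "Y ** X = mat 1"
proof -
  define P where "P = (\<chi> i. a (p i))"
  define Q where "Q = (\<chi> l m. w (q m) $ l)"
  define F' where "F' = (\<chi> i. f (p i))"
  define V' where "V' = (\<chi> i m. v (q m) $ i)"
  have PQ: "P ** Q = F' ** V'"
    unfolding P_def Q_def F'_def V'_def matrix_matrix_mult_def
    using eq p q by (simp add: vec_eq_iff inner_vec_def)
  have "invertible (P ** Q)" unfolding PQ F'_def V'_def using F V by (rule invertible_mult)
  then obtain C where C: "C ** (P ** Q) = mat 1" "(P ** Q) ** C = mat 1"
    unfolding invertible_def by blast
  have "invertible Q"
    using C(1) invertible_left_inverse[of Q] by (metis matrix_mul_assoc)
  then obtain Qi where Qi: "Q ** Qi = mat 1" "Qi ** Q = mat 1" unfolding invertible_def by blast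
  have "invertible P"
    using C(2) invertible_right_inverse[of P] by (metis matrix_mul_assoc)
  then obtain Pi where Pi: "P ** Pi = mat 1" "Pi ** P = mat 1" unfolding invertible_def by blast
  show ?thesis
  proof
    fix k assume k: "k \<in> K"
    have "a k v* Q = f k v* V'"
      unfolding Q_def V'_def vector_matrix_mult_def
      using eq[OF k q] by (simp add: vec_eq_iff inner_vec_def mult.commute)
    then have "a k v* Q v* Qi = f k v* V' v* Qi" by simp
    then show "a k = f k v* (V' ** Qi)" by (simp add: vector_matrix_mul_assoc Qi)
  next
    fix j assume j: "j \<in> J"
    have "P *v w j = F' *v v j"
      unfolding P_def F'_def matrix_vector_mult_def
      using eq[OF p j] by (simp add: vec_eq_iff inner_vec_def)
    then have "Pi *v (P *v w j) = Pi *v (F' *v v j)" by simp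
    then show "w j = (Pi ** F') *v v j" by (simp add: matrix_vector_mul_assoc Pi)
  next
    have "(Pi ** F') ** (V' ** Qi) = Pi ** ((F' ** V') ** Qi)"
      by (simp only: matrix_mul_assoc)
    also have "\<dots> = (Pi ** P) ** (Q ** Qi)"
      by (simp only: PQ[symmetric] matrix_mul_assoc)
    finally show "(Pi ** F') ** (V' ** Qi) = mat 1"
      by (simp add: Pi Qi)
  qed
qed

lemma cos_240: "cos (4 * pi / 3) = - 1 / 2"
  and sin_240: "sin (4 * pi / 3) = - sqrt 3 / 2"
proof -
  have "4 * pi / 3 = pi / 3 + pi" by simp
  then show "cos (4 * pi / 3) = - 1 / 2" "sin (4 * pi / 3) = - sqrt 3 / 2"
    by (simp_all only: cos_add sin_add cos_pi sin_pi cos_60 sin_60)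
qed

lemma sum_three_rotations:
  fixes p a b :: real
  shows "(\<Sum>m<3. (p - 2 * cos (a - 2 * pi * real m / 3)) * (1 + cos (b - 2 * pi * real m / 3)))
       = 3 * (p - cos (a - b))"
proof -
  have expand: "(\<Sum>m<3. g m) = g 0 + g 1 + g 2" for g :: "nat \<Rightarrow> real"
    by (simp add: eval_nat_numeral)
  have angles: "2 * pi * real (0::nat) / 3 = 0" "2 * pi * real (1::nat) / 3 = 2 * pi / 3"
    "2 * pi * real (2::nat) / 3 = 4 * pi / 3"
    by simp_all
  have "sqrt 3 * sqrt 3 = (3::real)" by simp
  then show ?thesis
    unfolding expand angles cos_diff cos_120 sin_120 cos_240 sin_240
    by (simp add: field_simps)
qed

lemma cauchy_schwarz_2:
  fixes x1 x2 y1 y2 :: real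
  shows "x1 * y1 + x2 * y2 \<le> sqrt (x1\<^sup>2 + x2\<^sup>2) * sqrt (y1\<^sup>2 + y2\<^sup>2)"
proof -
  have "(x1 * y1 + x2 * y2)\<^sup>2 \<le> (x1\<^sup>2 + x2\<^sup>2) * (y1\<^sup>2 + y2\<^sup>2)"
    using sum_squares_ge_zero[of "x1 * y2 - x2 * y1" 0]
    by (simp add: power2_eq_square algebra_simps)
  then have "x1 * y1 + x2 * y2 \<le> sqrt ((x1\<^sup>2 + x2\<^sup>2) * (y1\<^sup>2 + y2\<^sup>2))"
    using real_le_rsqrt by blast
  then show ?thesis by (simp add: real_sqrt_mult)
qed

lemma cos_multiple_le_cos_step:
  assumes N: "N \<ge> 2" and not_dvd: "\<not> int N dvd d"
  shows "cos (2 * pi * real_of_int d / real N) \<le> cos (2 * pi / real N)"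
proof -
  define e where "e = d mod int N"
  have N_pos: "real N > 0" using N by simp
  have "e \<noteq> 0" using not_dvd unfolding e_def by (simp add: dvd_eq_mod_eq_0)
  moreover have "e \<ge> 0" "e < int N" unfolding e_def using N by simp_all
  ultimately have e: "1 \<le> e" "e < int N" by linarith+
  have "real_of_int d = real_of_int (d div int N) * real N + real_of_int e"
    unfolding e_def by (metis div_mult_mod_eq of_int_add of_int_mult of_int_of_nat_eq)
  then have "2 * pi * real_of_int d / real N = 2 * pi * real_of_int e / real N + 2 * pi * of_int (d div int N)"
    using N_pos by (simp add: field_simps)
  then have reduce: "cos (2 * pi * real_of_int d / real N) = cos (2 * pi * real_of_int e / real N)"
    by (simp add: cos_add)
  have mono: "cos (2 * pi * real_of_int m / real N) \<le> cos (2 * pi / real N)"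
    if "1 \<le> m" "2 * m \<le> int N" for m :: int
  proof (rule cos_monotone_0_pi_le)
    show "2 * pi / real N \<le> 2 * pi * real_of_int m / real N"
      using that N_pos by (simp add: divide_right_mono)
    have "real_of_int (2 * m) \<le> real N" using that by linarith
    then show "2 * pi * real_of_int m / real N \<le> pi"
      using N_pos by (simp add: field_simps)
  qed (use N_pos in simp)
  show ?thesis
  proof (cases "2 * e \<le> int N")
    case True
    then show ?thesis using reduce mono e by simp
  next
    case False
    have "2 * pi * real_of_int e / real N = - (2 * pi * real_of_int (int N - e) / real N) + 2 * pi"
      using N_pos by (simp add: field_simps)
    then have "cos (2 * pi * real_of_int e / real N) = cos (2 * pi * real_of_int (int N - e) / real N)"
      by simp
    then show ?thesis using reduce mono[of "int N - e"] e False by simp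
  qed
qed

definition theta :: "nat \<Rightarrow> nat \<Rightarrow> real" where
  "theta N k = 2 * pi * real k / real N"

definition rho :: "nat \<Rightarrow> real" where
  "rho N = 2 * cos (2 * pi / real N)"

lemma nearest_polygon_direction:
  assumes N: "N \<ge> 1"
  shows "\<exists>k<N. cos (theta N k) * x1 + sin (theta N k) * x2 \<ge> sqrt (x1\<^sup>2 + x2\<^sup>2) * cos (pi / real N)"
proof (cases "x1 = 0 \<and> x2 = 0")
  case True
  then show ?thesis using N by (intro exI[of _ 0]) auto
next
  case False
  define s where "s = sqrt (x1\<^sup>2 + x2\<^sup>2)"
  have s_pos: "s > 0" unfolding s_def using False by (simp add: sum_power2_gt_zero_iff)
  have "(x1 / s)\<^sup>2 + (x2 / s)\<^sup>2 = (x1\<^sup>2 + x2\<^sup>2) / s\<^sup>2"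
    by (simp add: power_divide add_divide_distrib)
  also have "\<dots> = 1" using False unfolding s_def by (simp add: sum_power2_eq_zero_iff)
  finally have "(x1 / s)\<^sup>2 + (x2 / s)\<^sup>2 = 1" .
  then obtain t where t: "0 \<le> t" "t < 2 * pi" "x1 / s = cos t" "x2 / s = sin t"
    by (rule sincos_total_2pi)
  have N_pos: "real N > 0" using N by simp
  define m where "m = nat \<lfloor>t * real N / (2 * pi) + 1 / 2\<rfloor>"
  have "real m = of_int \<lfloor>t * real N / (2 * pi) + 1 / 2\<rfloor>"
    unfolding m_def using t N_pos by (simp add: zero_le_divide_iff)
  then have m: "real m \<le> t * real N / (2 * pi) + 1 / 2" "t * real N / (2 * pi) + 1 / 2 < real m + 1"
    by linarith+
  have "t * real N / (2 * pi) < real N" using t N_pos by (simp add: field_simps)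
  then have m_le: "m \<le> N" using m by linarith
  define \<delta> where "\<delta> = t - theta N m"
  have "\<delta> * real N = t * real N - 2 * pi * real m"
    unfolding \<delta>_def theta_def using N_pos by (simp add: field_simps)
  moreover have "(real m - 1 / 2) * (2 * pi) \<le> t * real N" "t * real N \<le> (real m + 1 / 2) * (2 * pi)"
    using m by (simp_all add: field_simps)
  ultimately have "\<bar>\<delta> * real N\<bar> \<le> pi" by (simp add: abs_le_iff algebra_simps)
  then have "\<bar>\<delta>\<bar> \<le> pi / real N" using N_pos by (simp add: abs_mult field_simps)
  then have close: "cos \<delta> \<ge> cos (pi / real N)"
    using cos_monotone_0_pi_le[of "\<bar>\<delta>\<bar>" "pi / real N"] N_pos N by (simp add: field_simps)
  have at_m: "cos (theta N m) * x1 + sin (theta N m) * x2 = s * cos \<delta>"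
    unfolding \<delta>_def cos_diff using t(3,4) s_pos by (simp add: field_simps)
  define k where "k = (if m = N then 0 else m)"
  have "cos (theta N k) = cos (theta N m)" "sin (theta N k) = sin (theta N m)"
    unfolding k_def theta_def using N_pos by auto
  then have "cos (theta N k) * x1 + sin (theta N k) * x2 \<ge> s * cos (pi / real N)"
    using at_m close s_pos by (simp add: mult_left_mono)
  moreover have "k < N" unfolding k_def using m_le N by auto
  ultimately show ?thesis unfolding s_def by blast
qed

lemma rho_eq_cos_half: "rho N = 2 * (2 * (cos (pi / real N))\<^sup>2 - 1)"
proof -
  have "2 * pi / real N = 2 * (pi / real N)" by simp
  then show ?thesis unfolding rho_def by (simp only: cos_double_cos)
qed

lemma rho_ge_1:
  assumes "N \<ge> 6"
  shows "rho N \<ge> 1"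
proof -
  have N: "real N \<ge> 6" using assms by simp
  then have "2 * pi / real N \<le> pi / 3" by (simp add: field_simps)
  then have "cos (pi / 3) \<le> cos (2 * pi / real N)"
    by (intro cos_monotone_0_pi_le) (use N in auto)
  then show ?thesis unfolding rho_def cos_60 by simp
qed

lemma rho_gap:
  fixes c t :: real
  assumes c: "0 < c" "c < 1" and t: "0 \<le> t" "t \<le> 1 / 3"
  shows "2 * (2 * c\<^sup>2 - 1) * t < (1 - t) * c\<^sup>2"
proof -
  have c2: "0 < c\<^sup>2" "c\<^sup>2 < 1" using c by (simp_all add: power_less_one_iff)
  have "0 < c\<^sup>2 * (1 - 5 * t) + 2 * t"
  proof (cases "5 * t \<le> 1")
    case True
    then have "0 \<le> c\<^sup>2 * (1 - 5 * t)" using c2 by simp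
    moreover have "0 < c\<^sup>2 * (1 - 5 * t) \<or> 0 < t" using c2 t by (cases "t = 0") auto
    ultimately show ?thesis using t by linarith
  next
    case False
    then have "1 - 5 * t < c\<^sup>2 * (1 - 5 * t)"
      using mult_strict_right_mono_neg[OF c2(2), of "1 - 5 * t"] by simp
    then show ?thesis using t by linarith
  qed
  then show ?thesis by (simp add: algebra_simps)
qed

lemma no_polygon_certificate:
  fixes x1 x2 z y1 y2 \<mu> :: real
  assumes N: "N \<ge> 3"
    and facets: "\<forall>k<N. cos (theta N k) * x1 + sin (theta N k) * x2 \<le> rho N * z"
    and vertices: "\<forall>j<N. 0 \<le> y1 * cos (theta N j) + y2 * sin (theta N j) + \<mu>"
    and dual: "y1 * x1 + y2 * x2 + \<mu> * z = 1"
    and t: "0 \<le> \<mu> * z" "\<mu> * z \<le> 1 / 3"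
  shows False
proof -
  define c where "c = cos (pi / real N)"
  have c: "0 < c" "c < 1"
    unfolding c_def using N cos_monotone_0_pi[of 0 "pi / real N"]
    by (auto intro!: cos_gt_zero simp: field_simps)
  define X where "X = sqrt (x1\<^sup>2 + x2\<^sup>2)"
  define Y where "Y = sqrt (y1\<^sup>2 + y2\<^sup>2)"
  obtain k where "k < N" "X * c \<le> cos (theta N k) * x1 + sin (theta N k) * x2"
    using nearest_polygon_direction[of N x1 x2] N unfolding X_def c_def by auto
  then have X_le: "X * c \<le> rho N * z" using facets by force
  obtain j where j: "j < N" "Y * c \<le> cos (theta N j) * - y1 + sin (theta N j) * - y2"
    using nearest_polygon_direction[of N "- y1" "- y2"] N unfolding Y_def c_def by auto
  have Y_le: "Y * c \<le> \<mu>" using vertices j by (force simp: algebra_simps)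
  have "1 - \<mu> * z \<le> Y * X"
    using cauchy_schwarz_2[of y1 x1 y2 x2] dual unfolding X_def Y_def by simp
  then have "(1 - \<mu> * z) * c\<^sup>2 \<le> (Y * X) * c\<^sup>2" by (rule mult_right_mono) simp
  also have "\<dots> = (Y * c) * (X * c)" by (simp add: power2_eq_square)
  also have "\<dots> \<le> \<mu> * (rho N * z)"
  proof (rule mult_mono[OF Y_le X_le])
    have "0 \<le> Y * c" using c by (simp add: Y_def)
    then show "0 \<le> \<mu>" using Y_le by linarith
    show "0 \<le> X * c" using c by (simp add: X_def)
  qed
  finally show False
    using rho_gap[OF c t] unfolding c_def rho_eq_cos_half by (simp add: algebra_simps)
qed

definition slack :: "nat \<Rightarrow> nat \<Rightarrow> nat \<Rightarrow> real" where
  "slack N k j = rho N - cos (theta N k - theta N j)"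

definition facet :: "nat \<Rightarrow> nat \<Rightarrow> real^3" where
  "facet N k = vector [- cos (theta N k), - sin (theta N k), rho N]"

definition vertex :: "nat \<Rightarrow> nat \<Rightarrow> real^3" where
  "vertex N j = vector [cos (theta N j), sin (theta N j), 1]"

lemma slack_eq_inner: "slack N k j = facet N k \<bullet> vertex N j"
  unfolding slack_def facet_def vertex_def inner_vec_def by (simp add: sum_3 cos_diff)

lemma slack_nonneg: "N \<ge> 6 \<Longrightarrow> 0 \<le> slack N k j"
  using rho_ge_1[of N] cos_le_one[of "theta N k - theta N j"] unfolding slack_def by linarith

definition equilateral :: "nat \<Rightarrow> 3 \<Rightarrow> nat" where
  "equilateral n i = (if i = 1 then 0 else if i = 2 then n else 2 * n)"

lemma equilateral_lt: "N = 3 * n \<Longrightarrow> 0 < n \<Longrightarrow> equilateral n i < N"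
  unfolding equilateral_def by auto

lemma theta_equilateral:
  assumes "N = 3 * n" and "0 < n"
  shows "theta N (equilateral n 1) = 0" "theta N (equilateral n 2) = 2 * pi / 3"
    "theta N (equilateral n 3) = 4 * pi / 3"
  using assms by (auto simp: equilateral_def theta_def field_simps)

lemma invertible_equilateral:
  assumes "N = 3 * n" and "0 < n" and "rho N \<noteq> 0"
  shows "invertible (\<chi> i. facet N (equilateral n i))"
    "invertible (\<chi> i m. vertex N (equilateral n m) $ i)"
  unfolding invertible_det_nz det_3 facet_def vertex_def vec_lambda_beta vector_3
    theta_equilateral[OF assms(1,2)] cos_120 sin_120 cos_240 sin_240
  using assms(3) by (simp_all add: algebra_simps)

lemma slack_rank_3_transform_absurd:
  fixes X Y :: "real^3^3"
  assumes N: "N = 3 * n" and n: "n \<ge> 2" and YX: "Y ** X = mat 1"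
    and facets: "\<And>k l. k < N \<Longrightarrow> 0 \<le> (facet N k v* X) $ l"
    and vertices: "\<And>j l. j < N \<Longrightarrow> 0 \<le> (Y *v vertex N j) $ l"
  shows False
proof -
  have n_pos: "0 < n" using n by simp
  have facet_X: "(facet N k v* X) $ l = - cos (theta N k) * X$1$l - sin (theta N k) * X$2$l + rho N * X$3$l"
    for k l unfolding facet_def vector_matrix_mult_def by (simp add: sum_3)
  have Y_vertex: "(Y *v vertex N j) $ l = Y$l$1 * cos (theta N j) + Y$l$2 * sin (theta N j) + Y$l$3"
    for j l unfolding vertex_def matrix_vector_mult_def by (simp add: sum_3)
  note equilateral = equilateral_lt[OF N n_pos] theta_equilateral[OF N n_pos]
  have X3: "0 \<le> X$3$l" for l
  proof -
    have "0 \<le> (facet N (equilateral n 1) v* X) $ l + (facet N (equilateral n 2) v* X) $ l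
        + (facet N (equilateral n 3) v* X) $ l"
      using facets equilateral by (simp add: add_nonneg_nonneg)
    also have "\<dots> = 3 * rho N * X$3$l"
      unfolding facet_X equilateral cos_120 sin_120 cos_240 sin_240 by (simp add: algebra_simps)
    finally show ?thesis using rho_ge_1[of N] N n by (simp add: zero_le_mult_iff)
  qed
  have Y3: "0 \<le> Y$l$3" for l
  proof -
    have "0 \<le> (Y *v vertex N (equilateral n 1)) $ l + (Y *v vertex N (equilateral n 2)) $ l
        + (Y *v vertex N (equilateral n 3)) $ l"
      using vertices equilateral by (simp add: add_nonneg_nonneg)
    also have "\<dots> = 3 * Y$l$3"
      unfolding Y_vertex equilateral cos_120 sin_120 cos_240 sin_240 by (simp add: algebra_simps)
    finally show ?thesis by simp
  qed
  have XY: "X ** Y = mat 1" using YX matrix_left_right_inverse by blast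
  have XY_33: "X$3$1 * Y$1$3 + X$3$2 * Y$2$3 + X$3$3 * Y$3$3 = 1"
    using arg_cong[OF XY, of "\<lambda>M. M$3$3"] by (simp add: matrix_matrix_mult_def sum_3 mat_def)
  obtain l where l: "X$3$l * Y$l$3 \<le> 1 / 3"
  proof (rule ccontr)
    assume "\<not> thesis"
    then have "1 / 3 < X$3$l * Y$l$3" for l using that not_le by blast
    from this[of 1] this[of 2] this[of 3] show False using XY_33 by linarith
  qed
  show False
  proof (rule no_polygon_certificate)
    show "N \<ge> 3" using N n by simp
    show "\<forall>k<N. cos (theta N k) * X$1$l + sin (theta N k) * X$2$l \<le> rho N * X$3$l"
      using facets unfolding facet_X by (simp add: algebra_simps)
    show "\<forall>j<N. 0 \<le> Y$l$1 * cos (theta N j) + Y$l$2 * sin (theta N j) + Y$l$3"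
      using vertices unfolding Y_vertex by simp
    show "Y$l$1 * X$1$l + Y$l$2 * X$2$l + Y$l$3 * X$3$l = 1"
      using arg_cong[OF YX, of "\<lambda>M. M$l$l"] by (simp add: matrix_matrix_mult_def sum_3 mat_def)
    show "0 \<le> Y$l$3 * X$3$l" using X3 Y3 by simp
    show "Y$l$3 * X$3$l \<le> 1 / 3" using l by (simp add: mult.commute)
  qed
qed

lemma slack_no_nonneg_fact_3:
  assumes N: "N = 3 * n" and n: "n \<ge> 2"
  shows "\<not> nonneg_fact_over (slack N) {..<N} N (UNIV :: 3 set)"
proof
  assume "nonneg_fact_over (slack N) {..<N} N (UNIV :: 3 set)"
  then obtain A :: "nat \<Rightarrow> 3 \<Rightarrow> real" and W :: "3 \<Rightarrow> nat \<Rightarrow> real"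
    where A: "\<forall>k\<in>{..<N}. \<forall>l\<in>UNIV. 0 \<le> A k l" and W: "\<forall>l\<in>UNIV. \<forall>j<N. 0 \<le> W l j"
      and eq: "\<forall>k\<in>{..<N}. \<forall>j<N. slack N k j = (\<Sum>l\<in>UNIV. A k l * W l j)"
    unfolding nonneg_fact_over_def by blast
  define a where "a k = (\<chi> l. A k l)" for k
  define w where "w j = (\<chi> l. W l j)" for j
  have n_pos: "0 < n" and "rho N \<noteq> 0" using n rho_ge_1[of N] N by auto
  moreover have "a k \<bullet> w j = facet N k \<bullet> vertex N j" if "k \<in> {..<N}" "j \<in> {..<N}" for k j
  proof -
    have "a k \<bullet> w j = slack N k j" using eq that unfolding a_def w_def inner_vec_def by simp
    then show ?thesis by (simp add: slack_eq_inner)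
  qed
  ultimately obtain X Y where X: "\<And>k. k \<in> {..<N} \<Longrightarrow> a k = facet N k v* X"
    and Y: "\<And>j. j \<in> {..<N} \<Longrightarrow> w j = Y *v vertex N j" and YX: "Y ** X = mat 1"
    using factorization_through_invertible_minor[where p = "equilateral n" and q = "equilateral n"]
      invertible_equilateral[OF N] equilateral_lt[OF N] by blast
  show False
  proof (rule slack_rank_3_transform_absurd[OF N n YX])
    show "0 \<le> (facet N k v* X) $ l" if "k < N" for k l
      using X[of k, symmetric] A that by (simp add: a_def)
    show "0 \<le> (Y *v vertex N j) $ l" if "j < N" for j l
      using Y[of j, symmetric] W that by (simp add: w_def)
  qed
qed

lemma slack_nonneg_fact_card_ge_4:
  assumes N: "N = 3 * n" and n: "n \<ge> 2"
    and "finite S" and fact: "nonneg_fact_over (slack N) {..<N} N S"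
  shows "4 \<le> card S"
proof (rule ccontr)
  assume "\<not> 4 \<le> card S"
  then have "card S \<le> card (UNIV :: 3 set)" by simp
  then obtain h :: "_ \<Rightarrow> 3" where "inj_on h S"
    using card_le_inj[OF \<open>finite S\<close>, of "UNIV :: 3 set"] by auto
  then have "nonneg_fact_over (slack N) {..<N} N (UNIV :: 3 set)"
    by (intro nonneg_fact_over_inj[OF _ _ _ fact]) auto
  then show False using slack_no_nonneg_fact_3[OF N n] by contradiction
qed

lemma slack_nonneg_fact_avoiding_residue:
  assumes N: "N = 3 * n" and c: "c < n"
  shows "nonneg_fact_over (slack N) {k. k mod n \<noteq> c} N {..<3::nat}"
proof -
  have n_pos: "0 < n" using c by simp
  define \<phi> where "\<phi> m = 2 * pi * real m / 3" for m :: nat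
  define A where "A k m = rho N - 2 * cos (theta N k - theta N c - \<phi> m)" for k m
  define W where "W m j = (1 + cos (theta N j - theta N c - \<phi> m)) / 3" for m j
  have "(\<Sum>m<3. A k m * W m j) = (\<Sum>m<3. A k m * (1 + cos (theta N j - theta N c - \<phi> m))) / 3"
    for k j unfolding W_def by (simp add: sum_divide_distrib)
  also have "\<dots> k j = slack N k j" for k j
    unfolding A_def \<phi>_def sum_three_rotations slack_def by simp
  finally have sum_eq: "slack N k j = (\<Sum>m<3. A k m * W m j)" for k j by simp
  have A_nonneg: "0 \<le> A k m" if k: "k mod n \<noteq> c" for k m
  proof -
    define d where "d = int k - int c - int m * int n"
    have "theta N k - theta N c - \<phi> m = 2 * pi * real_of_int d / real N"
      unfolding theta_def \<phi>_def d_def N using n_pos by (simp add: field_simps)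
    moreover have "\<not> int N dvd d"
    proof
      assume "int N dvd d"
      then have "int n dvd d" unfolding N by (metis dvd_mult_right of_nat_mult)
      moreover have "int k - int c = d + int m * int n" unfolding d_def by simp
      ultimately have "int n dvd int k - int c" by simp
      then have "k mod n = c mod n" by (metis mod_eq_dvd_iff of_nat_eq_iff zmod_int)
      then show False using k c by simp
    qed
    ultimately have "cos (theta N k - theta N c - \<phi> m) \<le> cos (2 * pi / real N)"
      using cos_multiple_le_cos_step[of N d] N n_pos by simp
    then show ?thesis unfolding A_def rho_def by simp
  qed
  have W_nonneg: "0 \<le> W m j" for m j
    unfolding W_def using cos_ge_minus_one[of "theta N j - theta N c - \<phi> m"]
    by (intro divide_nonneg_pos) linarith+
  show ?thesis
    unfolding nonneg_fact_over_def using sum_eq A_nonneg W_nonneg by blast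
qed

lemma slack_nonneg_fact_few_rows:
  assumes N: "N = 3 * n" and "finite K" and "card K < n"
  shows "nonneg_fact_over (slack N) K N {..<3::nat}"
proof -
  have "\<not> {..<n} \<subseteq> (\<lambda>k. k mod n) ` K"
    using card_mono[OF finite_imageI[OF \<open>finite K\<close>]] card_image_le[OF \<open>finite K\<close>, of "\<lambda>k. k mod n"]
      \<open>card K < n\<close> by fastforce
  then obtain c where "c < n" "K \<subseteq> {k. k mod n \<noteq> c}" by auto
  then show ?thesis
    using slack_nonneg_fact_avoiding_residue[OF N] nonneg_fact_over_subset_rows by blast
qed

theorem mainTheorem2:
  fixes r n :: nat
  assumes "n \<ge> 2"
  shows "\<exists>M :: nat \<Rightarrow> nat \<Rightarrow> real.
           (\<forall>i<3*r*n. \<forall>j<3*r*n. 0 \<le> M i j) \<and>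
           nonneg_rank M {..<3*r*n} (3*r*n) \<ge> 4*r \<and>
           (\<forall>I. I \<subseteq> {..<3*r*n} \<and> card I < n \<longrightarrow> nonneg_rank M I (3*r*n) \<le> 3*r)"
proof (intro exI conjI)
  define N where "N = 3 * n"
  have size: "3 * r * n = r * N" unfolding N_def by simp
  have nonneg: "0 \<le> block_diag N (slack N) i j" for i j
    unfolding block_diag_def N_def using slack_nonneg assms by simp
  then show "\<forall>i<3*r*n. \<forall>j<3*r*n. 0 \<le> block_diag N (slack N) i j" by simp
  have "4 * r \<le> k" if "nonneg_fact (block_diag N (slack N)) {..<r * N} (r * N) k" for k
    using nonneg_fact_block_diag_ge[OF slack_nonneg_fact_card_ge_4[OF N_def assms] that]
    by (simp add: mult.commute)
  then show "4 * r \<le> nonneg_rank (block_diag N (slack N)) {..<3*r*n} (3*r*n)"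
    unfolding size using nonneg by (intro nonneg_rank_ge) auto
  show "\<forall>I. I \<subseteq> {..<3*r*n} \<and> card I < n \<longrightarrow> nonneg_rank (block_diag N (slack N)) I (3*r*n) \<le> 3*r"
  proof (intro allI impI)
    fix I assume I: "I \<subseteq> {..<3*r*n} \<and> card I < n"
    then have "finite I" using finite_subset by blast
    have "nonneg_fact_over (block_diag N (slack N)) I (r * N) ({..<r} \<times> {..<3::nat})"
      using I card_block_rows_le[OF \<open>finite I\<close>] unfolding size
      by (intro nonneg_fact_over_block_diag slack_nonneg_fact_few_rows[OF N_def]) (auto intro: le_less_trans)
    then have "nonneg_fact (block_diag N (slack N)) I (r * N) (3 * r)"
      using nonneg_fact_card[of "{..<r} \<times> {..<3::nat}"] by (simp add: card_cartesian_product mult.commute)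
    then show "nonneg_rank (block_diag N (slack N)) I (3*r*n) \<le> 3 * r"
      unfolding size by (rule nonneg_rank_le)
  qed
qed

end
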